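(* Let $Y_1,Y_2,\ldots$ be i.i.d. $N(\mu,\sigma_0^2)$ with known $\sigma_0^2>0$, let $\bar Y_n$ be the sample mean of the first $n$ observations, and for $0<\alpha<1$ let $z_{1-\alpha/2}$ be the $(1-\alpha/2)$-quantile of the standard normal distribution, $\Phi$ its distribution function. For integers $n,m\ge1$, the probability that the intervals $\bar Y_n\pm\sigma_0 z_{1-\alpha/2}/\sqrt n$ and $\bar Y_{n+m}\pm\sigma_0 z_{1-\alpha/2}/\sqrt{n+m}$ are disjoint equals $$2\Phi\Big(-z_{1-\alpha/2}\Big(\sqrt{1+\tfrac nm}+\sqrt{\tfrac nm}\Big)\Big)>0 .$$ *)

theory Defs
  imports "HOL-Probability.Probability"
begin

definition Phi :: "real \<Rightarrow> real" where
  "Phi x = measure (density lborel std_normal_density) {..x}"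

definition std_normal_quantile :: "real \<Rightarrow> real" where
  "std_normal_quantile p = (THE z. Phi z = p)"

definition sample_mean :: "(nat \<Rightarrow> 'a \<Rightarrow> real) \<Rightarrow> nat \<Rightarrow> 'a \<Rightarrow> real" where
  "sample_mean Y n \<omega> = (\<Sum>i<n. Y i \<omega>) / real n"

end

theory Submission
  imports Defs "HOL-Probability.Distribution_Functions"
begin

text \<open>
  The difference of the two sample means is a linear combination of the independent observations
  whose weights sum to zero, so it is centred normal with variance \<open>\<sigma>\<^sub>0\<^sup>2 m / (n (n + m))\<close>.
  The two intervals are disjoint exactly when this difference exceeds the sum of the half-widths
  in absolute value; after standardisation this is the event that a standard normal variable
  exceeds \<open>z (\<surd>(1 + n/m) + \<surd>(n/m))\<close> in absolute value, which by symmetry has twice the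
  probability of the lower tail.
\<close>

abbreviation std_normal :: "real measure" where
  "std_normal \<equiv> density lborel std_normal_density"

interpretation std_normal: real_distribution std_normal
  using prob_space_normal_density by (simp add: real_distribution_def real_distribution_axioms_def)

lemma Phi_eq_cdf: "Phi = cdf std_normal"
  by (simp add: Phi_def cdf_def2 fun_eq_iff)

lemma measure_std_normal_singleton: "measure std_normal {x} = 0"
  by (simp add: measure_def emeasure_density nn_integral_null_set)

lemma measure_std_normal_greaterThanAtMost_pos:
  assumes "a < b"
  shows "measure std_normal {a<..b} > 0"
proof -
  have "emeasure std_normal {a<..b} \<noteq> 0"
  proof
    assume "emeasure std_normal {a<..b} = 0"
    then have "AE x in lborel. ennreal (std_normal_density x) * indicator {a<..b} x = 0"
      by (simp add: emeasure_density nn_integral_0_iff_AE)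
    then have "AE x in lborel. x \<notin> {a<..b}"
      by (rule AE_mp) (auto intro!: AE_I2 split: split_indicator
          simp: normal_density_pos[of 1, OF zero_less_one, THEN less_imp_neq, symmetric])
    then have "emeasure lborel {a<..b} = 0"
      by (subst (asm) AE_iff_measurable[OF _ refl])
        (auto simp: greaterThanAtMost_def greaterThan_def atMost_def Int_def)
    with assms show False
      by simp
  qed
  then show ?thesis
    by (simp add: std_normal.emeasure_eq_measure zero_less_measure_iff)
qed

lemma Phi_strict_mono: "a < b \<Longrightarrow> Phi a < Phi b"
  using std_normal.cdf_diff_eq[of a b] measure_std_normal_greaterThanAtMost_pos[of a b]
  by (simp add: Phi_eq_cdf)

lemma isCont_Phi: "isCont Phi x"
  by (simp add: Phi_eq_cdf std_normal.isCont_cdf measure_std_normal_singleton)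

lemma Phi_pos: "Phi x > 0"
  using std_normal.cdf_nonneg[of "x - 1"] Phi_strict_mono[of "x - 1" x]
  by (simp add: Phi_eq_cdf)

lemma measure_std_normal_lessThan: "measure std_normal {..<k} = Phi k"
proof -
  have "measure std_normal ({..<k} \<union> {k}) = measure std_normal {..<k} + measure std_normal {k}"
    by (rule std_normal.finite_measure_Union) auto
  moreover have "{..<k} \<union> {k} = {..k}"
    by auto
  ultimately show ?thesis
    by (simp add: Phi_def measure_std_normal_singleton)
qed

lemma measure_std_normal_greaterThan: "measure std_normal {k<..} = 1 - Phi k"
  using std_normal.prob_compl[of "{..k}"] by (simp add: Phi_def Compl_eq_Diff_UNIV[symmetric])

lemma distr_std_normal_uminus: "distr std_normal lborel uminus = std_normal"
proof -
  have "distributed std_normal lborel (\<lambda>x. x) std_normal_density"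
    by (simp add: distributed_def distr_id2)
  from std_normal.normal_density_affine[OF this, of "-1" 0]
  show ?thesis
    by (simp add: distributed_def)
qed

lemma measure_std_normal_symmetric: "measure std_normal {k<..} = measure std_normal {..<-k}"
proof -
  have "measure std_normal {k<..} = measure (distr std_normal lborel uminus) {k<..}"
    by (simp add: distr_std_normal_uminus)
  also have "\<dots> = measure std_normal (uminus -` {k<..})"
    by (simp add: measure_distr)
  also have "uminus -` {k<..} = {..<-k}"
    by auto
  finally show ?thesis .
qed

lemma Phi_minus: "Phi (- x) = 1 - Phi x"
  using measure_std_normal_symmetric[of x]
  by (simp add: measure_std_normal_greaterThan measure_std_normal_lessThan)

lemma Phi_std_normal_quantile:
  assumes "0 < p" "p < 1"
  shows "Phi (std_normal_quantile p) = p"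
proof -
  obtain a where a: "Phi a < p"
    using order_tendstoD(2)[OF std_normal.cdf_lim_at_bot assms(1)]
    by (auto simp: Phi_eq_cdf eventually_at_bot_linorder)
  obtain b where b: "p < Phi b"
    using order_tendstoD(1)[OF std_normal.cdf_lim_at_top_prob assms(2)]
    by (auto simp: Phi_eq_cdf eventually_at_top_linorder)
  have "a \<le> b"
    using a b Phi_strict_mono[of b a] by fastforce
  then obtain z where z: "Phi z = p"
    using IVT[of Phi a p b] a b isCont_Phi by auto
  have "\<exists>!z. Phi z = p"
    by (metis z Phi_strict_mono less_irrefl linorder_neqE_linordered_idom)
  then show ?thesis
    unfolding std_normal_quantile_def by (rule theI')
qed

lemma std_normal_quantile_pos:
  assumes "1/2 < p" "p < 1"
  shows "std_normal_quantile p > 0"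
proof -
  have "Phi 0 < Phi (std_normal_quantile p)"
    using Phi_minus[of 0] Phi_std_normal_quantile[of p] assms by simp
  then show ?thesis
    using Phi_strict_mono[of "std_normal_quantile p" 0] by (metis linorder_neqE_linordered_idom order.asym)
qed

lemma measure_std_normal_abs_greater:
  assumes "0 \<le> k"
  shows "measure std_normal {x. \<bar>x\<bar> > k} = 2 * Phi (- k)"
proof -
  have "measure std_normal ({..<-k} \<union> {k<..}) = measure std_normal {..<-k} + measure std_normal {k<..}"
    using assms by (intro std_normal.finite_measure_Union) auto
  moreover have "{..<-k} \<union> {k<..} = {x. \<bar>x\<bar> > k}"
    using assms by auto
  ultimately show ?thesis
    by (simp add: measure_std_normal_lessThan measure_std_normal_greaterThan Phi_minus[of k])
qed

lemma (in prob_space) prob_abs_centred_normal_greater: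
  assumes X: "distributed M lborel X (normal_density 0 s)" and "0 < s" "0 \<le> t"
  shows "prob {\<omega> \<in> space M. \<bar>X \<omega>\<bar> > t} = 2 * Phi (- t / s)"
proof -
  define Z where "Z \<omega> = X \<omega> / s" for \<omega>
  have Z: "distributed M lborel Z std_normal_density"
    using X normal_standard_normal_convert[OF \<open>0 < s\<close>, of X 0] by (simp add: Z_def[abs_def])
  then have Z_measurable: "Z \<in> borel_measurable M"
    by (simp add: distributed_def)
  have "{\<omega> \<in> space M. \<bar>X \<omega>\<bar> > t} = Z -` {x. \<bar>x\<bar> > t / s} \<inter> space M"
    using \<open>0 < s\<close> by (auto simp: Z_def divide_less_cancel)
  also have "prob \<dots> = measure (distr M lborel Z) {x. \<bar>x\<bar> > t / s}"
    using Z_measurable by (simp add: measure_distr)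
  also have "\<dots> = 2 * Phi (- t / s)"
    using Z assms by (simp add: distributed_def measure_std_normal_abs_greater)
  finally show ?thesis .
qed

lemma (in prob_space) distributed_weighted_sum_normal:
  assumes "finite I" "I \<noteq> {}" "indep_vars (\<lambda>_. borel) Y I"
    and "\<And>i. i \<in> I \<Longrightarrow> distributed M lborel (Y i) (normal_density \<mu> \<sigma>)"
    and "0 < \<sigma>" "\<And>i. i \<in> I \<Longrightarrow> c i \<noteq> 0"
  shows "distributed M lborel (\<lambda>\<omega>. \<Sum>i\<in>I. c i * Y i \<omega>)
           (normal_density (sum c I * \<mu>) (\<sigma> * sqrt (\<Sum>i\<in>I. (c i)\<^sup>2)))"
proof -
  have "indep_vars (\<lambda>_. borel) (\<lambda>i \<omega>. c i * Y i \<omega>) I"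
    using indep_vars_compose2[OF assms(3), of "\<lambda>i x. c i * x" "\<lambda>_. borel"] by simp
  from sum_indep_normal[OF assms(1,2) this, of "\<lambda>i. \<bar>c i\<bar> * \<sigma>" "\<lambda>i. c i * \<mu>"]
  have "distributed M lborel (\<lambda>\<omega>. \<Sum>i\<in>I. c i * Y i \<omega>)
          (normal_density (\<Sum>i\<in>I. c i * \<mu>) (sqrt (\<Sum>i\<in>I. (\<bar>c i\<bar> * \<sigma>)\<^sup>2)))"
    using assms normal_density_affine[of "Y _" \<mu> \<sigma> "c _" 0] by simp
  moreover have "sqrt (\<Sum>i\<in>I. (\<bar>c i\<bar> * \<sigma>)\<^sup>2) = \<sigma> * sqrt (\<Sum>i\<in>I. (c i)\<^sup>2)"
    using \<open>0 < \<sigma>\<close> by (simp add: power_mult_distrib sum_distrib_right[symmetric] real_sqrt_mult)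
  ultimately show ?thesis
    by (simp add: sum_distrib_right)
qed

definition mean_diff_weight :: "nat \<Rightarrow> nat \<Rightarrow> nat \<Rightarrow> real" where
  "mean_diff_weight n m i = (if i < n then 1 / real n - 1 / real (n + m) else - 1 / real (n + m))"

lemma sum_lessThan_add_split:
  fixes n m :: nat
  shows "(\<Sum>i<n + m. f i) = (\<Sum>i<n. f i) + (\<Sum>i = n..<n + m. f i)"
  by (simp add: sum.atLeastLessThan_concat lessThan_atLeast0)

lemma sum_mean_diff_weight_split:
  "(\<Sum>i<n + m. f (mean_diff_weight n m i) i)
     = (\<Sum>i<n. f (1 / real n - 1 / real (n + m)) i) + (\<Sum>i = n..<n + m. f (- 1 / real (n + m)) i)"
  unfolding sum_lessThan_add_split by (auto simp: mean_diff_weight_def intro!: sum.cong arg_cong2[where f = "(+)"])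

lemma sample_mean_diff_eq_weighted_sum:
  "sample_mean Y n \<omega> - sample_mean Y (n + m) \<omega> = (\<Sum>i<n + m. mean_diff_weight n m i * Y i \<omega>)"
proof -
  define A where "A = (\<Sum>i<n. Y i \<omega>)"
  define B where "B = (\<Sum>i = n..<n + m. Y i \<omega>)"
  have "(\<Sum>i<n + m. mean_diff_weight n m i * Y i \<omega>) = (1 / real n - 1 / real (n + m)) * A - B / real (n + m)"
    unfolding sum_mean_diff_weight_split[where f = "\<lambda>w i. w * Y i \<omega>"] A_def B_def
    by (simp add: sum_distrib_left sum_divide_distrib sum_negf)
  moreover have "sample_mean Y (n + m) \<omega> = (A + B) / real (n + m)"
    unfolding sample_mean_def A_def B_def sum_lessThan_add_split[where n = n] ..
  ultimately show ?thesis
    by (simp add: sample_mean_def A_def[symmetric] algebra_simps add_divide_distrib)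
qed

lemma sum_mean_diff_weight:
  assumes "0 < n"
  shows "(\<Sum>i<n + m. mean_diff_weight n m i) = 0"
proof -
  have "(\<Sum>i<n + m. mean_diff_weight n m i) = real n * (1 / real n - 1 / real (n + m)) - real m / real (n + m)"
    unfolding sum_mean_diff_weight_split[where f = "\<lambda>w i. w"] by simp
  also have "\<dots> = 0"
    using assms by (simp add: field_simps add_nonneg_eq_0_iff)
  finally show ?thesis .
qed

lemma sum_mean_diff_weight_squared:
  assumes "0 < n"
  shows "(\<Sum>i<n + m. (mean_diff_weight n m i)\<^sup>2) = real m / (real n * real (n + m))"
proof -
  have "(\<Sum>i<n + m. (mean_diff_weight n m i)\<^sup>2)
        = real n * (1 / real n - 1 / real (n + m))\<^sup>2 + real m * (1 / real (n + m))\<^sup>2"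
    unfolding sum_mean_diff_weight_split[where f = "\<lambda>w i. w\<^sup>2"] by (simp add: power2_eq_square)
  also have "\<dots> = real m / (real n * real (n + m))"
    using assms by (simp add: field_simps power2_eq_square add_nonneg_eq_0_iff)
  finally show ?thesis .
qed

lemma (in prob_space) sample_mean_diff_distributed:
  assumes "indep_vars (\<lambda>_. borel) Y UNIV"
    and "\<And>i. distributed M lborel (Y i) (normal_density \<mu> \<sigma>)" and "0 < \<sigma>"
    and "0 < n" "0 < m"
  shows "distributed M lborel (\<lambda>\<omega>. sample_mean Y n \<omega> - sample_mean Y (n + m) \<omega>)
           (normal_density 0 (\<sigma> * sqrt (real m / (real n * real (n + m)))))"
proof -
  have "{..<n + m} \<noteq> {}"
    using assms by (simp add: lessThan_empty_iff)
  moreover have "mean_diff_weight n m i \<noteq> 0" for i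
    using assms by (simp add: mean_diff_weight_def field_simps add_nonneg_eq_0_iff)
  ultimately show ?thesis
    using distributed_weighted_sum_normal[of "{..<n + m}" Y \<mu> \<sigma> "mean_diff_weight n m"]
      indep_vars_subset[OF assms(1) subset_UNIV] assms
    by (simp add: sample_mean_diff_eq_weighted_sum sum_mean_diff_weight
        sum_mean_diff_weight_squared)
qed

lemma Icc_disjoint_iff:
  fixes x y r s :: real
  assumes "0 \<le> r" "0 \<le> s"
  shows "{x - r..x + r} \<inter> {y - s..y + s} = {} \<longleftrightarrow> r + s < \<bar>x - y\<bar>"
  using assms by (auto simp: Int_atLeastAtMost abs_if)

lemma half_widths_over_sd:
  fixes x y \<sigma> z :: real
  assumes "0 < x" "0 < y" "0 < \<sigma>"
  shows "(\<sigma> * z / sqrt x + \<sigma> * z / sqrt (x + y)) / (\<sigma> * sqrt (y / (x * (x + y))))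
           = z * (sqrt (1 + x / y) + sqrt (x / y))"
proof -
  have "sqrt (1 + x / y) = sqrt (x + y) / sqrt y"
    using assms by (simp add: real_sqrt_divide[symmetric] field_simps)
  moreover have "sqrt (y / (x * (x + y))) = sqrt y / (sqrt x * sqrt (x + y))"
    by (simp add: real_sqrt_divide real_sqrt_mult)
  ultimately show ?thesis
    using assms by (simp add: real_sqrt_divide field_simps)
qed

theorem mainTheorem4:
  fixes M :: "'a measure" and Y :: "nat \<Rightarrow> 'a \<Rightarrow> real"
    and \<mu> \<sigma>\<^sub>0 \<alpha> :: real and n m :: nat
  assumes "prob_space M"
    and "prob_space.indep_vars M (\<lambda>_. borel) Y UNIV"
    and "\<And>i. distributed M lborel (Y i) (normal_density \<mu> \<sigma>\<^sub>0)"
    and "\<sigma>\<^sub>0 > 0"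
    and "0 < \<alpha>" and "\<alpha> < 1"
    and "n \<ge> 1" and "m \<ge> 1"
  shows "measure M {\<omega> \<in> space M.
            {sample_mean Y n \<omega> - \<sigma>\<^sub>0 * std_normal_quantile (1 - \<alpha>/2) / sqrt (real n) ..
             sample_mean Y n \<omega> + \<sigma>\<^sub>0 * std_normal_quantile (1 - \<alpha>/2) / sqrt (real n)}
          \<inter> {sample_mean Y (n + m) \<omega> - \<sigma>\<^sub>0 * std_normal_quantile (1 - \<alpha>/2) / sqrt (real (n + m)) ..
             sample_mean Y (n + m) \<omega> + \<sigma>\<^sub>0 * std_normal_quantile (1 - \<alpha>/2) / sqrt (real (n + m))}
          = {}}
        = 2 * Phi (- std_normal_quantile (1 - \<alpha>/2) * (sqrt (1 + real n / real m) + sqrt (real n / real m)))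
      \<and> 2 * Phi (- std_normal_quantile (1 - \<alpha>/2) * (sqrt (1 + real n / real m) + sqrt (real n / real m))) > 0"
proof -
  interpret prob_space M by fact
  define z where "z = std_normal_quantile (1 - \<alpha>/2)"
  define r where "r k = \<sigma>\<^sub>0 * z / sqrt (real k)" for k
  define s where "s = \<sigma>\<^sub>0 * sqrt (real m / (real n * real (n + m)))"
  have "0 < z"
    unfolding z_def using assms by (intro std_normal_quantile_pos) auto
  then have r_nonneg: "0 \<le> r k" for k
    using assms by (simp add: r_def)
  have "0 < s"
    using assms by (simp add: s_def)
  have D: "distributed M lborel (\<lambda>\<omega>. sample_mean Y n \<omega> - sample_mean Y (n + m) \<omega>) (normal_density 0 s)"
    unfolding s_def using assms by (intro sample_mean_diff_distributed) auto
  have "(r n + r (n + m)) / s = z * (sqrt (1 + real n / real m) + sqrt (real n / real m))"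
    unfolding r_def s_def of_nat_add using assms by (intro half_widths_over_sd) auto
  then show ?thesis
    unfolding z_def[symmetric] r_def[symmetric] Icc_disjoint_iff[OF r_nonneg r_nonneg]
    using prob_abs_centred_normal_greater[OF D \<open>0 < s\<close> add_nonneg_nonneg[OF r_nonneg r_nonneg]]
    by (simp add: Phi_pos minus_divide_left[symmetric] flip: minus_add_distrib)
qed

end
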